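(* Let $k\geq2$ be an integer and let $(f(n))_{n\geq0}$ be a $k$-regular sequence over a field $\mathcal{S}\subseteq\mathbb{A}$ (the real algebraic numbers), with matrices $F_0,\dots,F_{k-1}$ of a minimal linear representation of it. Set $F(n)=F_{n_0}\cdots F_{n_{s-1}}$ for $(n)_k=n_{s-1}\cdots n_0$. Let $\sigma\in\mathbb{R}$, $\ell\in\mathbb{N}_0$, and $h(n)=n^\sigma(\log n)^\ell$. Then $f(n)\in O(h(n))$ if and only if $F(n)\in O(h(n))$. In particular, $(f(n))_{n\geq0}$ and $(F(n))_{n\geq0}$ have exactly the same growth rate.
   Context: For $n\in\mathbb{N}_0$, $(n)_k=n_{s-1}\cdots n_0$ is the standard base-$k$ representation of $n$ (no leading zeros; $(0)_k$ empty). A linear representation of $(f(n))_{n\geq0}$ consists of $r\geq0$, a $1\times r$ row vector $\lambda$, an $r\times1$ column vector $\gamma$ and $r\times r$ matrices $F_0,\dots,F_{k-1}$ over $\mathcal{S}$ with $f(n)=\lambda F_{n_0}\cdots F_{n_{s-1}}\gamma$ for all $n$; $f$ is $k$-regular if it has one, and the representation is minimal if $r$ is smallest possible for $f$. $f(n)\in O(g(n))$ means there exist $n_0$, $c>0$ with $|f(n)|\leq c\,g(n)$ for $n\geq n_0$; a sequence of matrices is in $O(g(n))$ if each entry sequence (fixed row and column) is, equivalently if the sequence of norms is. A sequence has exact growth $n^\sigma(\log n)^\ell$ if it is in $O(n^\sigma(\log n)^\ell)$ but not in $O(n^{\sigma'}(\log n)^{\ell'})$ for any $\sigma'\in\mathbb{R},\ell'\in\mathbb{N}_0$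 with $(\sigma',\ell')$ lexicographically smaller than $(\sigma,\ell)$. *)

theory Defs
  imports "HOL-Computational_Algebra.Polynomial" "HOL-Library.Landau_Symbols"
          "Jordan_Normal_Form.Matrix"
begin

fun base_digits :: "nat \<Rightarrow> nat \<Rightarrow> nat list" where
  "base_digits k n = (if n = 0 \<or> k < 2 then [] else n mod k # base_digits k (n div k))"

definition mat_of_n :: "nat \<Rightarrow> nat \<Rightarrow> (nat \<Rightarrow> real mat) \<Rightarrow> nat \<Rightarrow> real mat" where
  "mat_of_n k r Fs n = foldr (\<lambda>d M. Fs d * M) (base_digits k n) (1\<^sub>m r)"

definition subfield_of_real_algebraic :: "real set \<Rightarrow> bool" where
  "subfield_of_real_algebraic S \<longleftrightarrow>
     0 \<in> S \<and> 1 \<in> S \<and> (\<forall>x\<in>S. \<forall>y\<in>S. x + y \<in> S \<and> x * y \<in> S \<and> x - y \<in> S)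
     \<and> (\<forall>x\<in>S. x \<noteq> 0 \<longrightarrow> inverse x \<in> S) \<and> (\<forall>x\<in>S. algebraic x)"

definition mat_over :: "real set \<Rightarrow> real mat \<Rightarrow> bool" where
  "mat_over S M \<longleftrightarrow> (\<forall>i<dim_row M. \<forall>j<dim_col M. M $$ (i,j) \<in> S)"

definition is_linrep ::
  "real set \<Rightarrow> nat \<Rightarrow> (nat \<Rightarrow> real) \<Rightarrow> nat \<Rightarrow> real mat \<Rightarrow> real mat \<Rightarrow> (nat \<Rightarrow> real mat) \<Rightarrow> bool" where
  "is_linrep S k f r lam gam Fs \<longleftrightarrow>
     lam \<in> carrier_mat 1 r \<and> gam \<in> carrier_mat r 1 \<and> mat_over S lam \<and> mat_over S gam \<and>
     (\<forall>d<k. Fs d \<in> carrier_mat r r \<and> mat_over S (Fs d)) \<and>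
     (\<forall>n. f n = (lam * mat_of_n k r Fs n * gam) $$ (0,0))"

definition is_minimal_linrep ::
  "real set \<Rightarrow> nat \<Rightarrow> (nat \<Rightarrow> real) \<Rightarrow> nat \<Rightarrow> real mat \<Rightarrow> real mat \<Rightarrow> (nat \<Rightarrow> real mat) \<Rightarrow> bool" where
  "is_minimal_linrep S k f r lam gam Fs \<longleftrightarrow>
     is_linrep S k f r lam gam Fs \<and>
     (\<forall>r' lam' gam' Fs'. is_linrep S k f r' lam' gam' Fs' \<longrightarrow> r \<le> r')"

end

(*
  One direction is trivial: f(n) = lam F(n) gam is a fixed linear combination of the entries
  of F(n). For the other, minimality forces the row vectors lam F(w), w any digit word, to span
  all of R^r, and likewise gam together with the column vectors F(v) gam, v a nonempty digit word
  with nonzero last digit: otherwise a basis of their span, chosen with coordinates in S, yields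
  a representation of smaller dimension. For such w and v, lam F(w) F(n) F(v) gam = f(m), where
  the base-k digits of m are those of n framed by w and v, so n <= m <= K n and hence
  h(m) = O(h(n)). Writing unit vectors as combinations of these row and column vectors bounds
  every entry of F(n) by O(h(n)).
*)
theory Submission
  imports Defs "HOL-Library.Function_Algebras" "HOL-Library.Indicator_Function"
begin

section \<open>Subfields of the real numbers\<close>

lemma subfield_closed:
  assumes "subfield_of_real_algebraic S" and "a \<in> S" and "b \<in> S"
  shows "a + b \<in> S" and "a * b \<in> S" and "a - b \<in> S" and "a / b \<in> S"
  using assms unfolding subfield_of_real_algebraic_def divide_inverse
  by (cases "b = 0"; auto)+

lemma subfield_zero_one:
  assumes "subfield_of_real_algebraic S"
  shows "0 \<in> S" and "1 \<in> S"
  using assms unfolding subfield_of_real_algebraic_def by blast+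

lemma subfield_sum:
  assumes "subfield_of_real_algebraic S" and "\<And>x. x \<in> A \<Longrightarrow> g x \<in> S"
  shows "sum g A \<in> S"
  using assms(2)
  by (induction A rule: infinite_finite_induct)
     (auto intro: subfield_closed subfield_zero_one assms(1))

section \<open>Real sequences as vectors\<close>

instantiation "fun" :: (type, real_vector) real_vector
begin
definition scaleR_fun :: "real \<Rightarrow> ('a \<Rightarrow> 'b) \<Rightarrow> 'a \<Rightarrow> 'b" where
  "scaleR_fun c f = (\<lambda>x. c *\<^sub>R f x)"
instance
  by standard (simp_all add: scaleR_fun_def fun_eq_iff algebra_simps)
end

lemma scaleR_fun_apply [simp]: "(c *\<^sub>R f) x = c *\<^sub>R f x"
  by (simp add: scaleR_fun_def)

lemma sum_fun_apply: "(\<Sum>s\<in>A. g s) x = (\<Sum>s\<in>A. g s x)"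
  by (induction A rule: infinite_finite_induct) auto

definition eliminate :: "nat \<Rightarrow> (nat \<Rightarrow> real) \<Rightarrow> (nat \<Rightarrow> real) \<Rightarrow> nat \<Rightarrow> real" where
  "eliminate p x b = b - (b p / x p) *\<^sub>R x"

lemma linear_eliminate: "linear (eliminate p x)"
  by (rule linearI) (auto simp: eliminate_def fun_eq_iff add_divide_distrib algebra_simps)

lemma eliminate_self: "x p \<noteq> 0 \<Longrightarrow> eliminate p x x = 0"
  by (simp add: eliminate_def)

lemma range_eliminate_subset:
  assumes "subfield_of_real_algebraic S" and "range x \<subseteq> S" and "range b \<subseteq> S"
  shows "range (eliminate p x b) \<subseteq> S"
  using assms by (auto simp: eliminate_def intro!: subfield_closed(2-4)[OF assms(1)])

lemma eliminate_mem_span: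
  assumes "x p \<noteq> 0" and "v \<in> span (insert x B)"
  shows "eliminate p x v \<in> span (eliminate p x ` B)"
proof -
  obtain a where "v - a *\<^sub>R x \<in> span B"
    using assms(2) by (auto simp: real_vector.span_insert)
  moreover have "eliminate p x v = eliminate p x (v - a *\<^sub>R x)"
    using assms(1) by (simp add: linear_diff linear_scale linear_eliminate eliminate_self)
  ultimately show ?thesis
    by (simp add: linear_span_image linear_eliminate)
qed

lemma eliminate_eq_imp_eq_add_scaleR:
  "eliminate p x v = eliminate p x w \<Longrightarrow> v = w + ((v p - w p) / x p) *\<^sub>R x"
  by (auto simp: fun_eq_iff eliminate_def diff_divide_distrib algebra_simps dest!: fun_cong)

lemma span_list_coeffs_in_subfield:
  fixes bs :: "(nat \<Rightarrow> real) list"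
  assumes S: "subfield_of_real_algebraic S"
    and "\<forall>b\<in>set bs. range b \<subseteq> S" and "range v \<subseteq> S" and "v \<in> span (set bs)"
  shows "\<exists>c. range c \<subseteq> S \<and> v = (\<Sum>s<length bs. c s *\<^sub>R bs ! s)"
  using assms(2-)
proof (induction "length bs" arbitrary: bs v)
  case 0
  then show ?case
    using subfield_zero_one[OF S] by (intro exI[of _ "\<lambda>_. 0"]) auto
next
  case (Suc n)
  then obtain x bs' where bs: "bs = x # bs'" and n: "n = length bs'"
    by (metis length_Suc_conv)
  have bs'_S: "\<forall>b\<in>set bs'. range b \<subseteq> S" and x_S: "range x \<subseteq> S"
    using Suc.prems(1) bs by auto
  have v: "v \<in> span (insert x (set bs'))"
    using Suc.prems(3) bs by simp
  have "\<exists>c a. range c \<subseteq> S \<and> a \<in> S \<and> v = (\<Sum>s<n. c s *\<^sub>R bs' ! s) + a *\<^sub>R x"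
  proof (cases "x = 0")
    case True
    then show ?thesis
      using Suc.hyps(1)[OF n bs'_S Suc.prems(2)] v subfield_zero_one[OF S] n
      by (auto simp: real_vector.span_insert_0)
  next
    case False
    then obtain p where p: "x p \<noteq> 0"
      by (auto simp: fun_eq_iff)
    \<comment> \<open>Eliminating coordinate p kills x and keeps coordinates in S, so induction applies.\<close>
    let ?g = "eliminate p x"
    obtain c where c: "range c \<subseteq> S" "?g v = (\<Sum>s<n. c s *\<^sub>R map ?g bs' ! s)"
      using Suc.hyps(1)[of "map ?g bs'" "?g v"] eliminate_mem_span[OF p v] n bs'_S x_S Suc.prems(2)
        range_eliminate_subset[OF S] by auto
    define w where "w = (\<Sum>s<n. c s *\<^sub>R bs' ! s)"
    have "?g v = ?g w"
      using c(2) n by (simp add: w_def linear_sum linear_scale linear_eliminate)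
    then have "v = w + ((v p - w p) / x p) *\<^sub>R x"
      by (rule eliminate_eq_imp_eq_add_scaleR)
    moreover have "w p \<in> S"
      using c(1) bs'_S n
      by (auto simp: w_def sum_fun_apply intro!: subfield_sum[OF S] subfield_closed[OF S])
         (meson nth_mem rangeI subsetD)
    then have "(v p - w p) / x p \<in> S"
      using Suc.prems(2) x_S by (intro subfield_closed[OF S]) auto
    ultimately show ?thesis
      using c(1) unfolding w_def by blast
  qed
  then obtain c a where c: "range c \<subseteq> S" "a \<in> S" "v = (\<Sum>s<n. c s *\<^sub>R bs' ! s) + a *\<^sub>R x"
    by blast
  have "v = (\<Sum>s<length bs. case_nat a c s *\<^sub>R bs ! s)"
    by (simp add: sum.lessThan_Suc_shift c(3) bs n del: sum.lessThan_Suc)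
  moreover have "range (case_nat a c) \<subseteq> S"
    using c(1,2) by (auto split: nat.split simp: image_subset_iff)
  ultimately show ?case
    by blast
qed

definition vanishing_from :: "nat \<Rightarrow> (nat \<Rightarrow> real) set" where
  "vanishing_from r = {x. \<forall>i\<ge>r. x i = 0}"

lemma vanishing_from_subset_span: "vanishing_from r \<subseteq> span ((\<lambda>i. indicator {i}) ` {..<r})"
proof
  fix x assume x: "x \<in> vanishing_from r"
  have "x = (\<Sum>i<r. x i *\<^sub>R indicator {i})"
  proof
    fix j
    show "x j = (\<Sum>i<r. x i *\<^sub>R indicator {i}) j"
      using x by (cases "j < r") (auto simp: sum_fun_apply vanishing_from_def indicator_def)
  qed
  also have "\<dots> \<in> span ((\<lambda>i. indicator {i}) ` {..<r})"
    by (intro real_vector.span_sum real_vector.span_scale real_vector.span_base) auto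
  finally show "x \<in> span ((\<lambda>i. indicator {i}) ` {..<r})" .
qed

lemma independent_card_less:
  assumes "independent B" and "B \<subseteq> vanishing_from r"
    and "i < r" and "indicator {i} \<notin> span B"
  shows "finite B \<and> card B < r"
proof -
  have card_le: "finite B' \<and> card B' \<le> r" if "independent B'" "B' \<subseteq> vanishing_from r" for B'
  proof -
    let ?U = "(\<lambda>i. indicator {i} :: nat \<Rightarrow> real) ` {..<r}"
    have "card ?U \<le> r"
      using card_image_le[of "{..<r}"] by simp
    moreover have "B' \<subseteq> span ?U"
      using that(2) vanishing_from_subset_span by blast
    ultimately show ?thesis
      using real_vector.independent_span_bound[of ?U B'] that(1) by auto
  qed
  have "independent (insert (indicator {i}) B)"
    using assms(1,4) by (rule real_vector.independent_insertI[rotated])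
  moreover have "insert (indicator {i}) B \<subseteq> vanishing_from r"
    using assms(2,3) by (auto simp: vanishing_from_def)
  ultimately have "card (insert (indicator {i}) B) \<le> r"
    using card_le by blast
  moreover have "indicator {i} \<notin> B"
    using assms(4) real_vector.span_base by blast
  ultimately show ?thesis
    using card_le[OF assms(1,2)] by simp
qed

lemma short_spanning_list:
  assumes "insert x V \<subseteq> vanishing_from r" and "i < r" and "indicator {i} \<notin> span (insert x V)"
  obtains bs where "set bs \<subseteq> V" and "V \<subseteq> span (set bs)" and "length bs < r"
    and "x \<notin> span (set bs) \<Longrightarrow> length bs + 1 < r"
proof -
  obtain B where B: "B \<subseteq> V" "independent B" "V \<subseteq> span B"
    using real_vector.maximal_independent_subset by blast
  have not_span: "indicator {i} \<notin> span (insert x B)"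
    using assms(3) real_vector.span_mono[of "insert x B" "insert x V"] B(1) by blast
  then have B_card: "finite B \<and> card B < r"
    using independent_card_less[OF B(2) _ assms(2)] B(1) assms(1) real_vector.span_mono[of B] by blast
  obtain bs where bs: "set bs = B" "distinct bs"
    using B_card finite_distinct_list by blast
  have length_bs: "length bs = card B"
    using bs distinct_card by fastforce
  show ?thesis
  proof (rule that)
    show "set bs \<subseteq> V" "V \<subseteq> span (set bs)" and "length bs < r"
      using bs B B_card length_bs by auto
    assume x: "x \<notin> span (set bs)"
    then have "card (insert x B) < r"
      using independent_card_less[OF real_vector.independent_insertI[OF _ B(2)] _ assms(2) not_span]
        B(1) assms(1) bs(1) by blast
    moreover have "x \<notin> B"
      using x bs(1) real_vector.span_base by blast
    ultimately show "length bs + 1 < r"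
      using B_card length_bs by simp
  qed
qed

section \<open>Base-k digits\<close>

declare base_digits.simps [simp del]

lemma base_digits_0 [simp]: "base_digits k 0 = []"
  by (simp add: base_digits.simps)

lemma base_digits_pos: "k \<ge> 2 \<Longrightarrow> n > 0 \<Longrightarrow> base_digits k n = n mod k # base_digits k (n div k)"
  by (subst base_digits.simps) simp

lemma base_digits_eq_Nil_iff: "k \<ge> 2 \<Longrightarrow> base_digits k n = [] \<longleftrightarrow> n = 0"
  by (cases "n = 0") (auto simp: base_digits_pos)

definition from_digits :: "nat \<Rightarrow> nat list \<Rightarrow> nat" where
  "from_digits k ds = foldr (\<lambda>d acc. d + k * acc) ds 0"

lemma from_digits_Nil [simp]: "from_digits k [] = 0"
  and from_digits_Cons [simp]: "from_digits k (d # ds) = d + k * from_digits k ds"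
  by (simp_all add: from_digits_def)

lemma from_digits_append:
  "from_digits k (xs @ ys) = from_digits k xs + k ^ length xs * from_digits k ys"
  by (induction xs) (simp_all add: algebra_simps)

lemma from_digits_less: "set ds \<subseteq> {..<k} \<Longrightarrow> from_digits k ds < k ^ length ds"
proof (induction ds)
  case (Cons d ds)
  then have "d + k * from_digits k ds < k * (from_digits k ds + 1)"
    by simp
  also have "\<dots> \<le> k * k ^ length ds"
    using Cons by (intro mult_le_mono2) simp
  finally show ?case
    by simp
qed simp

lemma from_digits_base_digits: "k \<ge> 2 \<Longrightarrow> from_digits k (base_digits k n) = n"
proof (induction k n rule: base_digits.induct)
  case (1 k n)
  then show ?case
    by (cases "n = 0") (auto simp: base_digits_pos)
qed

text \<open>Digit lists start with the least significant digit, so canonical means no leading zero.\<close>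

definition canonical_digits :: "nat \<Rightarrow> nat list \<Rightarrow> bool" where
  "canonical_digits k ds \<longleftrightarrow> set ds \<subseteq> {..<k} \<and> (ds = [] \<or> last ds \<noteq> 0)"

lemma canonical_digits_Cons:
  "canonical_digits k (d # ds) \<longleftrightarrow> d < k \<and> canonical_digits k ds \<and> (ds = [] \<longrightarrow> d \<noteq> 0)"
  by (auto simp: canonical_digits_def)

lemma canonical_base_digits: "k \<ge> 2 \<Longrightarrow> canonical_digits k (base_digits k n)"
proof (induction k n rule: base_digits.induct)
  case (1 k n)
  show ?case
  proof (cases "n = 0")
    case False
    then have "base_digits k (n div k) = [] \<longrightarrow> n mod k \<noteq> 0"
      using 1 by (auto simp: base_digits_eq_Nil_iff div_eq_0_iff)
    then show ?thesis
      using 1 False by (simp add: base_digits_pos canonical_digits_Cons)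
  qed (simp add: canonical_digits_def)
qed

lemma set_base_digits_subset: "set (base_digits k n) \<subseteq> {..<k}"
proof (cases "k \<ge> 2")
  case True
  then show ?thesis
    using canonical_base_digits by (simp add: canonical_digits_def)
qed (simp add: base_digits.simps)

lemma from_digits_pos:
  assumes "k > 0" and "canonical_digits k ds" and "ds \<noteq> []"
  shows "from_digits k ds > 0"
proof -
  obtain us d where ds: "ds = us @ [d]" and "d \<noteq> 0"
    using assms(2,3) by (metis append_butlast_last_id canonical_digits_def)
  then show ?thesis
    using assms(1) by (simp add: from_digits_append)
qed

lemma base_digits_from_digits:
  "k \<ge> 2 \<Longrightarrow> canonical_digits k ds \<Longrightarrow> base_digits k (from_digits k ds) = ds"
proof (induction ds)
  case (Cons d ds)
  then have "from_digits k (d # ds) > 0"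
    by (intro from_digits_pos) auto
  then show ?case
    using Cons by (simp add: base_digits_pos canonical_digits_Cons)
qed simp

lemma power_length_base_digits_le:
  "k \<ge> 2 \<Longrightarrow> n > 0 \<Longrightarrow> k ^ length (base_digits k n) \<le> k * n"
proof (induction k n rule: base_digits.induct)
  case (1 k n)
  show ?case
  proof (cases "n div k = 0")
    case True
    then show ?thesis
      using 1 by (simp add: base_digits_pos)
  next
    case False
    then have "k ^ length (base_digits k n) \<le> k * (k * (n div k))"
      using 1 by (simp add: base_digits_pos)
    also have "\<dots> \<le> k * n"
      by simp
    finally show ?thesis .
  qed
qed

lemma base_digits_snoc:
  assumes "k \<ge> 2" and "n > 0"
  obtains u d where "base_digits k n = u @ [d]" and "set u \<subseteq> {..<k}" and "0 < d" and "d < k"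
proof -
  have "canonical_digits k (base_digits k n)" and "base_digits k n \<noteq> []"
    using assms by (simp_all add: canonical_base_digits base_digits_eq_Nil_iff)
  then show ?thesis
    using that by (metis append_butlast_last_id canonical_digits_def bot_nat_0.not_eq_extremum
        in_set_butlastD last_in_set lessThan_iff subset_iff)
qed

lemma from_digits_padded_bounds:
  assumes k: "k \<ge> 2" and w: "set w \<subseteq> {..<k}" and v: "set v \<subseteq> {..<k}" and n: "n > 0"
  defines "m \<equiv> from_digits k (w @ base_digits k n @ v)"
  shows "n \<le> m" and "m \<le> k ^ length w * (2 + k ^ Suc (length v)) * n"
proof -
  let ?ds = "base_digits k n"
  have m: "m = from_digits k w + k ^ length w * (n + k ^ length ?ds * from_digits k v)"
    using k by (simp add: m_def from_digits_append from_digits_base_digits)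
  have Kn: "n \<le> k ^ length w * n" "k ^ length w \<le> k ^ length w * n"
    using k n by simp_all
  then show "n \<le> m"
    unfolding m distrib_left by linarith
  have "from_digits k w \<le> k ^ length w * n"
    using from_digits_less[OF w] Kn(2) by linarith
  moreover have "k ^ length ?ds * from_digits k v \<le> (k * n) * k ^ length v"
    using power_length_base_digits_le[OF k n] from_digits_less[OF v] by (intro mult_le_mono) auto
  then have "k ^ length w * (n + k ^ length ?ds * from_digits k v)
      \<le> k ^ length w * (n + k ^ Suc (length v) * n)"
    by (intro mult_le_mono2 add_left_mono) (simp add: mult_ac)
  ultimately have "m \<le> k ^ length w * n + k ^ length w * (n + k ^ Suc (length v) * n)"
    unfolding m by (rule add_mono)
  also have "\<dots> = k ^ length w * (2 + k ^ Suc (length v)) * n"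
    by (simp add: algebra_simps)
  finally show "m \<le> k ^ length w * (2 + k ^ Suc (length v)) * n" .
qed

section \<open>The growth function\<close>

lemma powr_ln_power_le:
  fixes x y K \<sigma> :: real
  assumes "1 \<le> K" and "K \<le> x" and "x \<le> y" and "y \<le> K * x"
  shows "\<bar>y powr \<sigma> * ln y ^ l\<bar> \<le> K powr \<bar>\<sigma>\<bar> * 2 ^ l * \<bar>x powr \<sigma> * ln x ^ l\<bar>"
proof -
  have x: "x \<ge> 1" and y: "y \<ge> 1"
    using assms by linarith+
  have "ln y \<le> ln (K * x)"
    using assms x by simp
  also have "\<dots> = ln K + ln x"
    using assms x by (simp add: ln_mult)
  also have "\<dots> \<le> 2 * ln x"
    using assms by simp
  finally have "ln y ^ l \<le> 2 ^ l * ln x ^ l"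
    using y by (metis power_mono power_mult_distrib ln_ge_zero)
  moreover have "y powr \<sigma> \<le> K powr \<bar>\<sigma>\<bar> * x powr \<sigma>"
  proof (cases "\<sigma> \<ge> 0")
    case True
    have "y powr \<sigma> \<le> (K * x) powr \<sigma>"
      using True assms x by (intro powr_mono2) auto
    then show ?thesis
      using True assms x by (simp add: powr_mult)
  next
    case False
    have "y powr \<sigma> \<le> x powr \<sigma>"
      using False assms x by (intro powr_mono2') auto
    also have "\<dots> \<le> K powr \<bar>\<sigma>\<bar> * x powr \<sigma>"
      using ge_one_powr_ge_zero[OF assms(1), of "\<bar>\<sigma>\<bar>"]
      by (metis abs_ge_zero mult_1 mult_right_mono powr_ge_zero)
    finally show ?thesis .
  qed
  ultimately have "y powr \<sigma> * ln y ^ l \<le> (K powr \<bar>\<sigma>\<bar> * x powr \<sigma>) * (2 ^ l * ln x ^ l)"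
    using y by (intro mult_mono) auto
  then show ?thesis
    using x y by (simp add: mult_ac)
qed

lemma bigo_compose_linearly_bounded:
  fixes f :: "nat \<Rightarrow> real" and m :: "nat \<Rightarrow> nat"
  assumes f: "f \<in> O(\<lambda>n. real n powr \<sigma> * ln (real n) ^ l)"
    and m: "eventually (\<lambda>n. n \<le> m n \<and> m n \<le> K * n) at_top"
  shows "(\<lambda>n. f (m n)) \<in> O(\<lambda>n. real n powr \<sigma> * ln (real n) ^ l)"
proof -
  let ?h = "\<lambda>n::nat. real n powr \<sigma> * ln (real n) ^ l"
  have "filterlim m at_top at_top"
    by (rule filterlim_at_top_mono[OF filterlim_ident]) (use m in \<open>auto elim: eventually_mono\<close>)
  then have "(\<lambda>n. f (m n)) \<in> O(\<lambda>n. ?h (m n))"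
    by (rule landau_o.big.compose[OF f])
  also have "(\<lambda>n. ?h (m n)) \<in> O(?h)"
  proof (rule landau_o.bigI)
    show "0 < real K powr \<bar>\<sigma>\<bar> * 2 ^ l + 1"
      by (simp add: add_nonneg_pos)
    have "eventually (\<lambda>n. n \<ge> K + 1 \<and> n \<le> m n \<and> m n \<le> K * n) at_top"
      using eventually_ge_at_top[of "K + 1"] m by (rule eventually_conj)
    then show "eventually (\<lambda>n. norm (?h (m n)) \<le> (real K powr \<bar>\<sigma>\<bar> * 2 ^ l + 1) * norm (?h n)) at_top"
    proof (rule eventually_mono)
      fix n assume n: "n \<ge> K + 1 \<and> n \<le> m n \<and> m n \<le> K * n"
      then have "K \<ge> 1"
        by (cases "K = 0") auto
      then have "norm (?h (m n)) \<le> real K powr \<bar>\<sigma>\<bar> * 2 ^ l * norm (?h n)"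
        using n powr_ln_power_le[of "real K" "real n" "real (m n)" \<sigma> l]
        by (simp del: of_nat_mult add: of_nat_mult[symmetric])
      also have "\<dots> \<le> (real K powr \<bar>\<sigma>\<bar> * 2 ^ l + 1) * norm (?h n)"
        by (intro mult_right_mono) auto
      finally show "norm (?h (m n)) \<le> (real K powr \<bar>\<sigma>\<bar> * 2 ^ l + 1) * norm (?h n)" .
    qed
  qed
  finally show ?thesis .
qed

section \<open>Matrix products along words\<close>

lemma assoc_mult_mat_middle:
  assumes "A \<in> carrier_mat a n" "B \<in> carrier_mat n m" "C \<in> carrier_mat m p" "D \<in> carrier_mat p b"
  shows "A * (B * C) * D = A * B * (C * D)"
  using assoc_mult_mat[OF assms(1-3)] assoc_mult_mat[OF mult_carrier_mat[OF assms(1,2)] assms(3,4)]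
  by simp

definition mat_of_word :: "nat \<Rightarrow> (nat \<Rightarrow> 'a :: semiring_1 mat) \<Rightarrow> nat list \<Rightarrow> 'a mat" where
  "mat_of_word r Fs w = foldr (\<lambda>d M. Fs d * M) w (1\<^sub>m r)"

lemma mat_of_word_Nil [simp]: "mat_of_word r Fs [] = 1\<^sub>m r"
  and mat_of_word_Cons [simp]: "mat_of_word r Fs (d # w) = Fs d * mat_of_word r Fs w"
  by (simp_all add: mat_of_word_def)

lemma mat_of_n_eq_mat_of_word: "mat_of_n k r Fs n = mat_of_word r Fs (base_digits k n)"
  by (simp add: mat_of_n_def mat_of_word_def)

lemma mat_of_word_carrier:
  "(\<And>d. d \<in> set w \<Longrightarrow> Fs d \<in> carrier_mat r r) \<Longrightarrow> mat_of_word r Fs w \<in> carrier_mat r r"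
  by (induction w) (auto intro: mult_carrier_mat)

lemma mat_of_word_append:
  assumes "\<And>d. d \<in> set (u @ v) \<Longrightarrow> Fs d \<in> carrier_mat r r"
  shows "mat_of_word r Fs (u @ v) = mat_of_word r Fs u * mat_of_word r Fs v"
  using assms
proof (induction u)
  case Nil
  then show ?case
    using mat_of_word_carrier[of v Fs r] by simp
next
  case (Cons d u)
  then show ?case
    using mat_of_word_carrier[of u Fs r] mat_of_word_carrier[of v Fs r]
    by (simp add: assoc_mult_mat[of "Fs d" r r _ r _ r])
qed

lemma mat_of_word_snoc:
  assumes "\<And>d'. d' \<in> set (u @ [d]) \<Longrightarrow> Fs d' \<in> carrier_mat r r"
  shows "mat_of_word r Fs (u @ [d]) = mat_of_word r Fs u * Fs d"
proof -
  have "Fs d \<in> carrier_mat r r"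
    using assms by simp
  then show ?thesis
    using mat_of_word_append[of u "[d]" Fs r, OF assms] by simp
qed

lemma mat_of_word_intertwine:
  assumes C: "C \<in> carrier_mat m n"
    and AB: "\<And>d. d \<in> set w \<Longrightarrow> A d \<in> carrier_mat m m \<and> B d \<in> carrier_mat n n \<and> A d * C = C * B d"
  shows "mat_of_word m A w * C = C * mat_of_word n B w"
  using AB
proof (induction w)
  case Nil
  then show ?case
    using C by simp
next
  case (Cons d w)
  have A: "A d \<in> carrier_mat m m" and B: "B d \<in> carrier_mat n n" and AC: "A d * C = C * B d"
    using Cons.prems by auto
  have Aw: "mat_of_word m A w \<in> carrier_mat m m" and Bw: "mat_of_word n B w \<in> carrier_mat n n"
    using Cons.prems by (auto intro: mat_of_word_carrier)
  have "mat_of_word m A (d # w) * C = A d * (mat_of_word m A w * C)"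
    using A Aw C by (simp add: assoc_mult_mat)
  also have "\<dots> = A d * (C * mat_of_word n B w)"
    using Cons by simp
  also have "\<dots> = (C * B d) * mat_of_word n B w"
    using A C Bw AC by (simp flip: assoc_mult_mat)
  also have "\<dots> = C * mat_of_word n B (d # w)"
    using B C Bw by (simp add: assoc_mult_mat)
  finally show ?case .
qed

lemma mat_over_mult:
  assumes S: "subfield_of_real_algebraic S"
    and "mat_over S A" and "mat_over S B" and "dim_col A = dim_row B"
  shows "mat_over S (A * B)"
  unfolding mat_over_def
proof (intro allI impI)
  fix i j assume ij: "i < dim_row (A * B)" "j < dim_col (A * B)"
  have "(A * B) $$ (i, j) = (\<Sum>p<dim_row B. A $$ (i, p) * B $$ (p, j))"
    using ij assms(4) by (auto simp: scalar_prod_def lessThan_atLeast0 intro!: sum.cong)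
  also have "\<dots> \<in> S"
    using ij assms(2-4) by (auto simp: mat_over_def intro!: subfield_sum[OF S] subfield_closed[OF S])
  finally show "(A * B) $$ (i, j) \<in> S" .
qed

lemma mat_over_one: "subfield_of_real_algebraic S \<Longrightarrow> mat_over S (1\<^sub>m r)"
  using subfield_zero_one by (auto simp: mat_over_def)

lemma mat_over_mat_of_word:
  assumes S: "subfield_of_real_algebraic S"
    and "\<And>d. d \<in> set w \<Longrightarrow> Fs d \<in> carrier_mat r r \<and> mat_over S (Fs d)"
  shows "mat_over S (mat_of_word r Fs w)"
  using assms(2)
proof (induction w)
  case (Cons d w)
  have Fd: "Fs d \<in> carrier_mat r r" "mat_over S (Fs d)" and "mat_over S (mat_of_word r Fs w)"
    using Cons by auto
  moreover have "mat_of_word r Fs w \<in> carrier_mat r r"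
    using Cons.prems by (auto intro: mat_of_word_carrier)
  ultimately show ?case
    using mat_over_mult[OF S Fd(2)] by simp
qed (simp add: mat_over_one[OF S])

lemma mat_over_transpose [simp]: "mat_over S (transpose_mat A) \<longleftrightarrow> mat_over S A"
  by (auto simp: mat_over_def)

section \<open>Columns and the bilinear form\<close>

definition col_fun :: "real mat \<Rightarrow> nat \<Rightarrow> real" where
  "col_fun A i = (if i < dim_row A then A $$ (i, 0) else 0)"

definition mat_of_col_funs :: "nat \<Rightarrow> (nat \<Rightarrow> real) list \<Rightarrow> real mat" where
  "mat_of_col_funs r bs = mat r (length bs) (\<lambda>(i, s). (bs ! s) i)"

lemma col_fun_vanishing_from: "A \<in> carrier_mat r n \<Longrightarrow> col_fun A \<in> vanishing_from r"
  by (simp add: col_fun_def vanishing_from_def)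

lemma range_col_fun_subset:
  "subfield_of_real_algebraic S \<Longrightarrow> mat_over S A \<Longrightarrow> dim_col A > 0 \<Longrightarrow> range (col_fun A) \<subseteq> S"
  using subfield_zero_one by (auto simp: col_fun_def mat_over_def)

lemma mat_over_mat_of_col_funs: "\<forall>b\<in>set bs. range b \<subseteq> S \<Longrightarrow> mat_over S (mat_of_col_funs r bs)"
  by (auto simp: mat_over_def mat_of_col_funs_def) (meson nth_mem rangeI subsetD)

lemma mat_of_col_funs_col_fun: "A \<in> carrier_mat r 1 \<Longrightarrow> mat_of_col_funs r [col_fun A] = A"
  by (auto simp: mat_of_col_funs_def col_fun_def)

lemma col_in_span_eq_mult:
  assumes S: "subfield_of_real_algebraic S" and bs: "\<forall>b\<in>set bs. range b \<subseteq> S"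
    and A: "A \<in> carrier_mat r 1" "mat_over S A" and span: "col_fun A \<in> span (set bs)"
  shows "\<exists>y \<in> carrier_mat (length bs) 1. mat_over S y \<and> A = mat_of_col_funs r bs * y"
proof -
  obtain c where c: "range c \<subseteq> S" "col_fun A = (\<Sum>s<length bs. c s *\<^sub>R bs ! s)"
    using span_list_coeffs_in_subfield[OF S bs _ span] range_col_fun_subset[OF S] A by auto
  define y where "y = mat (length bs) 1 (\<lambda>(s, _). c s)"
  have "A = mat_of_col_funs r bs * y"
  proof (rule eq_matI)
    fix i j assume "i < dim_row (mat_of_col_funs r bs * y)" "j < dim_col (mat_of_col_funs r bs * y)"
    then have i: "i < r" and j: "j = 0"
      by (auto simp: mat_of_col_funs_def y_def)
    have "A $$ (i, j) = (\<Sum>s<length bs. c s *\<^sub>R bs ! s) i"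
      using A(1) i j fun_cong[OF c(2), of i] by (simp add: col_fun_def)
    also have "\<dots> = (mat_of_col_funs r bs * y) $$ (i, j)"
      using i j by (auto simp: sum_fun_apply mat_of_col_funs_def y_def scalar_prod_def
          lessThan_atLeast0 mult.commute intro!: sum.cong)
    finally show "A $$ (i, j) = (mat_of_col_funs r bs * y) $$ (i, j)" .
  qed (use A(1) in \<open>auto simp: mat_of_col_funs_def y_def\<close>)
  moreover have "mat_over S y"
    using c(1) by (auto simp: mat_over_def y_def)
  ultimately show ?thesis
    by (auto simp: y_def)
qed

lemma intertwining_mat_exists:
  assumes S: "subfield_of_real_algebraic S" and bs: "\<forall>b\<in>set bs. range b \<subseteq> S"
    and P: "P \<in> carrier_mat r r" "mat_over S P"
    and closed: "\<And>s. s < length bs \<Longrightarrow> col_fun (P * mat_of_col_funs r [bs ! s]) \<in> span (set bs)"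
  shows "\<exists>M \<in> carrier_mat (length bs) (length bs).
           mat_over S M \<and> P * mat_of_col_funs r bs = mat_of_col_funs r bs * M"
proof -
  let ?t = "length bs" and ?C = "mat_of_col_funs r bs"
  have "\<forall>s\<in>{..<?t}. \<exists>y. y \<in> carrier_mat ?t 1 \<and> mat_over S y \<and> P * mat_of_col_funs r [bs ! s] = ?C * y"
  proof
    fix s assume s: "s \<in> {..<?t}"
    have "mat_over S (mat_of_col_funs r [bs ! s])"
      using bs s by (intro mat_over_mat_of_col_funs) auto
    then have "mat_over S (P * mat_of_col_funs r [bs ! s])"
      using P by (intro mat_over_mult[OF S]) (auto simp: mat_of_col_funs_def)
    moreover have "P * mat_of_col_funs r [bs ! s] \<in> carrier_mat r 1"
      using P by (simp add: mat_of_col_funs_def)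
    ultimately show "\<exists>y. y \<in> carrier_mat ?t 1 \<and> mat_over S y \<and> P * mat_of_col_funs r [bs ! s] = ?C * y"
      using col_in_span_eq_mult[OF S bs _ _ closed] s by blast
  qed
  then obtain Y where Y: "\<And>s. s < ?t \<Longrightarrow>
      Y s \<in> carrier_mat ?t 1 \<and> mat_over S (Y s) \<and> P * mat_of_col_funs r [bs ! s] = ?C * Y s"
    by (metis bchoice lessThan_iff)
  define M where "M = mat ?t ?t (\<lambda>(q, s). Y s $$ (q, 0))"
  have "P * ?C = ?C * M"
  proof (rule eq_matI)
    fix i s assume "i < dim_row (?C * M)" "s < dim_col (?C * M)"
    then have i: "i < r" and s: "s < ?t"
      by (auto simp: mat_of_col_funs_def M_def)
    have "(P * ?C) $$ (i, s) = (P * mat_of_col_funs r [bs ! s]) $$ (i, 0)"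
      using P(1) i s by (auto simp: mat_of_col_funs_def scalar_prod_def intro!: sum.cong)
    also have "\<dots> = (?C * Y s) $$ (i, 0)"
      using Y[OF s] by simp
    also have "\<dots> = (?C * M) $$ (i, s)"
      using Y[OF s] i s by (auto simp: mat_of_col_funs_def M_def scalar_prod_def intro!: sum.cong)
    finally show "(P * ?C) $$ (i, s) = (?C * M) $$ (i, s)" .
  qed (use P(1) in \<open>auto simp: mat_of_col_funs_def M_def\<close>)
  moreover have "Y s $$ (q, 0) \<in> S" if "s < ?t" "q < ?t" for s q
    using Y[OF that(1)] that(2) by (auto simp: mat_over_def)
  then have "mat_over S M"
    by (auto simp: mat_over_def M_def)
  ultimately show ?thesis
    by (auto simp: M_def)
qed

lemmas sum_delta_simps =
  if_distrib[where f="\<lambda>x. _ * x"] if_distrib[where f="\<lambda>x. x * _"] sum.delta sum.delta'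

definition bilinear_form :: "nat \<Rightarrow> (nat \<Rightarrow> real) \<Rightarrow> real mat \<Rightarrow> (nat \<Rightarrow> real) \<Rightarrow> real" where
  "bilinear_form r x M y = (\<Sum>p<r. \<Sum>q<r. x p * M $$ (p, q) * y q)"

lemma bilinear_form_col_fun:
  assumes "a \<in> carrier_mat r 1" and "M \<in> carrier_mat r r" and "c \<in> carrier_mat r 1"
  shows "bilinear_form r (col_fun a) M (col_fun c) = (transpose_mat a * M * c) $$ (0, 0)"
proof -
  have "(transpose_mat a * M * c) $$ (0, 0) = (\<Sum>p<r. a $$ (p, 0) * (\<Sum>q<r. M $$ (p, q) * c $$ (q, 0)))"
    using assms by (simp add: scalar_prod_def lessThan_atLeast0 assoc_mult_mat[of _ 1 r M r c 1])
  also have "\<dots> = bilinear_form r (col_fun a) M (col_fun c)"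
    using assms by (simp add: bilinear_form_def col_fun_def sum_distrib_left mult.assoc)
  finally show ?thesis ..
qed

lemma bilinear_form_indicator:
  "i < r \<Longrightarrow> j < r \<Longrightarrow> bilinear_form r (indicator {i}) M (indicator {j}) = M $$ (i, j)"
  by (simp add: bilinear_form_def indicator_def of_bool_def sum_delta_simps cong: if_cong)

lemma linear_bilinear_form_left: "linear (\<lambda>x. bilinear_form r x M y)"
  by (rule linearI) (simp_all add: bilinear_form_def algebra_simps sum.distrib sum_distrib_left)

lemma linear_bilinear_form_right: "linear (\<lambda>y. bilinear_form r x M y)"
  by (rule linearI) (simp_all add: bilinear_form_def algebra_simps sum.distrib sum_distrib_left)

lemma bilinear_form_bigo:
  assumes "\<forall>i<r. \<forall>j<r. (\<lambda>n. M n $$ (i, j)) \<in> O[F](g)"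
  shows "(\<lambda>n. bilinear_form r x (M n) y) \<in> O[F](g)"
  unfolding bilinear_form_def
proof (intro big_sum_in_bigo)
  fix p q assume "p \<in> {..<r}" "q \<in> {..<r}"
  then have "(\<lambda>n. (x p * y q) * M n $$ (p, q)) \<in> O[F](g)"
    using assms by (cases "x p * y q = 0") auto
  then show "(\<lambda>n. x p * M n $$ (p, q) * y q) \<in> O[F](g)"
    by (simp add: mult_ac)
qed

lemma subspace_bigo_linear:
  fixes L :: "'a \<Rightarrow> 'b :: real_vector \<Rightarrow> real"
  assumes "\<And>n. linear (L n)"
  shows "subspace {x. (\<lambda>n. L n x) \<in> O[F](g)}"
  using assms
  by (auto simp: real_vector.subspace_def linear_0 linear_add linear_scale
      intro!: sum_in_bigo landau_o.big.mult_left)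

section \<open>Transforming linear representations\<close>

lemma is_linrepD:
  assumes "is_linrep S k f r lam gam Fs"
  shows "lam \<in> carrier_mat 1 r" and "gam \<in> carrier_mat r 1"
    and "mat_over S lam" and "mat_over S gam"
    and "\<And>d. d < k \<Longrightarrow> Fs d \<in> carrier_mat r r" and "\<And>d. d < k \<Longrightarrow> mat_over S (Fs d)"
    and "\<And>n. f n = (lam * mat_of_word r Fs (base_digits k n) * gam) $$ (0, 0)"
  using assms by (auto simp: is_linrep_def mat_of_n_eq_mat_of_word)

lemma mat_of_n_carrier: "is_linrep S k f r lam gam Fs \<Longrightarrow> mat_of_n k r Fs n \<in> carrier_mat r r"
  using set_base_digits_subset
  by (auto simp: is_linrep_def mat_of_n_eq_mat_of_word intro!: mat_of_word_carrier)

lemma linrep_value_in_subfield: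
  assumes S: "subfield_of_real_algebraic S" and rep: "is_linrep S k f r lam gam Fs"
  shows "f n \<in> S"
proof -
  note rep' = is_linrepD[OF rep]
  have "mat_over S (mat_of_n k r Fs n)"
    using rep'(5,6) set_base_digits_subset[of k n] unfolding mat_of_n_eq_mat_of_word
    by (intro mat_over_mat_of_word[OF S]) (auto simp: subset_iff)
  then have "mat_over S (lam * mat_of_n k r Fs n * gam)"
    using rep'(1-4) mat_of_n_carrier[OF rep, of n] by (intro mat_over_mult[OF S]) auto
  then show ?thesis
    using rep'(1,2) rep'(7)[of n] by (auto simp: mat_over_def mat_of_n_eq_mat_of_word)
qed

lemma linrep_bigo_if_entries_bigo:
  assumes rep: "is_linrep S k f r lam gam Fs"
    and entries: "\<forall>i<r. \<forall>j<r. (\<lambda>n. mat_of_n k r Fs n $$ (i, j)) \<in> O[F](g)"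
  shows "f \<in> O[F](g)"
proof -
  note rep' = is_linrepD[OF rep]
  have "f = (\<lambda>n. bilinear_form r (col_fun (transpose_mat lam)) (mat_of_n k r Fs n) (col_fun gam))"
    using rep'(1,2,7) mat_of_n_carrier[OF rep]
    by (intro ext) (simp add: bilinear_form_col_fun mat_of_n_eq_mat_of_word)
  then show ?thesis
    using bilinear_form_bigo[OF entries] by simp
qed

lemma is_linrep_intertwine_left:
  assumes S: "subfield_of_real_algebraic S" and rep: "is_linrep S k f r lam gam Fs"
    and B: "B \<in> carrier_mat t r" "mat_over S B"
    and lam': "lam' \<in> carrier_mat 1 t" "mat_over S lam'" "lam' * B = lam"
    and Fs': "\<And>d. d < k \<Longrightarrow> Fs' d \<in> carrier_mat t t \<and> mat_over S (Fs' d) \<and> Fs' d * B = B * Fs d"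
  shows "is_linrep S k f t lam' (B * gam) Fs'"
proof -
  note rep = is_linrepD[OF rep]
  have "f n = (lam' * mat_of_word t Fs' (base_digits k n) * (B * gam)) $$ (0, 0)" for n
  proof -
    let ?w = "base_digits k n"
    have w: "d \<in> set ?w \<Longrightarrow> d < k" for d
      using set_base_digits_subset by blast
    have F: "mat_of_word r Fs ?w \<in> carrier_mat r r" and F': "mat_of_word t Fs' ?w \<in> carrier_mat t t"
      using rep(5) Fs' w by (auto intro!: mat_of_word_carrier)
    have "lam * mat_of_word r Fs ?w * gam = lam' * (B * mat_of_word r Fs ?w) * gam"
      using lam'(1) B(1) F by (simp add: assoc_mult_mat flip: lam'(3))
    also have "B * mat_of_word r Fs ?w = mat_of_word t Fs' ?w * B"
      using Fs' rep(5) w by (intro mat_of_word_intertwine[OF B(1), symmetric]) auto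
    also have "lam' * (mat_of_word t Fs' ?w * B) * gam = lam' * mat_of_word t Fs' ?w * B * gam"
      by (simp add: assoc_mult_mat[OF lam'(1) F' B(1)])
    also have "\<dots> = lam' * mat_of_word t Fs' ?w * (B * gam)"
      by (rule assoc_mult_mat[OF mult_carrier_mat[OF lam'(1) F'] B(1) rep(2)])
    finally show ?thesis
      using rep(7) by simp
  qed
  moreover have "mat_over S (B * gam)"
    using B rep(2,4) by (intro mat_over_mult[OF S]) auto
  ultimately show ?thesis
    using lam' B rep(2) Fs' by (auto simp: is_linrep_def mat_of_n_eq_mat_of_word)
qed

lemma is_linrep_intertwine_right:
  assumes S: "subfield_of_real_algebraic S" and rep: "is_linrep S k f r lam gam Fs"
    and C: "C \<in> carrier_mat r t" "mat_over S C"
    and M: "\<And>d. d < k \<Longrightarrow> M d \<in> carrier_mat t t \<and> mat_over S (M d) \<and> Fs d * C = C * M d"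
    and y: "y \<in> carrier_mat t 1" "mat_over S y" "gam = C * y"
  shows "is_linrep S k f t (lam * C) y M"
proof -
  note rep = is_linrepD[OF rep]
  have "f n = (lam * C * mat_of_word t M (base_digits k n) * y) $$ (0, 0)" for n
  proof -
    let ?w = "base_digits k n"
    have w: "d \<in> set ?w \<Longrightarrow> d < k" for d
      using set_base_digits_subset by blast
    have F: "mat_of_word r Fs ?w \<in> carrier_mat r r" and M': "mat_of_word t M ?w \<in> carrier_mat t t"
      using rep(5) M w by (auto intro!: mat_of_word_carrier)
    have "lam * mat_of_word r Fs ?w * gam = lam * mat_of_word r Fs ?w * C * y"
      unfolding y(3) by (rule assoc_mult_mat[OF mult_carrier_mat[OF rep(1) F] C(1) y(1), symmetric])
    also have "\<dots> = lam * (mat_of_word r Fs ?w * C) * y"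
      by (simp add: assoc_mult_mat[OF rep(1) F C(1)])
    also have "mat_of_word r Fs ?w * C = C * mat_of_word t M ?w"
      using M rep(5) w by (intro mat_of_word_intertwine[OF C(1)]) auto
    also have "lam * (C * mat_of_word t M ?w) * y = lam * C * mat_of_word t M ?w * y"
      using assoc_mult_mat[OF rep(1) C(1) M'] by simp
    finally show ?thesis
      using rep(7) by simp
  qed
  moreover have "mat_over S (lam * C)"
    using C rep(1,3) by (intro mat_over_mult[OF S]) auto
  ultimately show ?thesis
    using rep(1) C y M by (auto simp: is_linrep_def mat_of_n_eq_mat_of_word)
qed

lemma linrep_eval_through_embedding:
  assumes k: "k \<ge> 2" and rep: "is_linrep S k f r lam gam Fs"
    and C: "C \<in> carrier_mat r t"
    and M: "\<And>d. d < k \<Longrightarrow> M d \<in> carrier_mat t t \<and> Fs d * C = C * M d"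
    and Y: "\<And>d. 0 < d \<Longrightarrow> d < k \<Longrightarrow> Y d \<in> carrier_mat t 1 \<and> Fs d * gam = C * Y d"
    and carriers: "lam' \<in> carrier_mat 1 T" "e \<in> carrier_mat T 1" "E \<in> carrier_mat T t"
      "\<And>d. Fs' d \<in> carrier_mat T T"
    and FE: "\<And>d. d < k \<Longrightarrow> Fs' d * E = E * M d"
    and Fe: "\<And>d. 0 < d \<Longrightarrow> d < k \<Longrightarrow> Fs' d * e = E * Y d"
    and lamE: "lam' * E = lam * C" and lame: "(lam' * e) $$ (0, 0) = f 0"
  shows "f n = (lam' * mat_of_word T Fs' (base_digits k n) * e) $$ (0, 0)"
proof (cases "n = 0")
  case True
  then show ?thesis
    using carriers lame by simp
next
  case False
  note rep = is_linrepD[OF rep]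
  obtain u d where ud: "base_digits k n = u @ [d]" "set u \<subseteq> {..<k}" "0 < d" "d < k"
    using base_digits_snoc[OF k] False by blast
  have Fu: "mat_of_word r Fs u \<in> carrier_mat r r" and Mu: "mat_of_word t M u \<in> carrier_mat t t"
    and F'u: "mat_of_word T Fs' u \<in> carrier_mat T T"
    using ud rep(5) M carriers(4) by (auto intro!: mat_of_word_carrier)
  have FC: "mat_of_word r Fs u * C = C * mat_of_word t M u"
    using ud M rep(5) by (intro mat_of_word_intertwine[OF C]) auto
  have F'E: "mat_of_word T Fs' u * E = E * mat_of_word t M u"
    using ud M FE carriers(4) by (intro mat_of_word_intertwine[OF carriers(3)]) auto
  have Yd: "Y d \<in> carrier_mat t 1" and Fd: "Fs d \<in> carrier_mat r r"
    using Y ud rep(5) by blast+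
  have "lam' * mat_of_word T Fs' (u @ [d]) * e = lam' * mat_of_word T Fs' u * (E * Y d)"
    using mat_of_word_snoc[of u d Fs' T] carriers(4)
    by (simp only: assoc_mult_mat_middle[OF carriers(1) F'u carriers(4) carriers(2)] Fe[OF ud(3,4)])
  also have "\<dots> = lam' * (E * mat_of_word t M u) * Y d"
    by (simp only: assoc_mult_mat_middle[OF carriers(1) F'u carriers(3) Yd, symmetric] F'E)
  also have "\<dots> = lam * C * (mat_of_word t M u * Y d)"
    by (simp only: assoc_mult_mat_middle[OF carriers(1) carriers(3) Mu Yd] lamE)
  also have "\<dots> = lam * (mat_of_word r Fs u * C) * Y d"
    by (simp only: assoc_mult_mat_middle[OF rep(1) C Mu Yd, symmetric] FC)
  also have "\<dots> = lam * mat_of_word r Fs u * (Fs d * gam)"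
    using Y[OF ud(3,4)] by (simp only: assoc_mult_mat_middle[OF rep(1) Fu C Yd])
  also have "\<dots> = lam * mat_of_word r Fs (u @ [d]) * gam"
  proof -
    have "mat_of_word r Fs (u @ [d]) = mat_of_word r Fs u * Fs d"
      using ud rep(5) by (intro mat_of_word_snoc) auto
    then show ?thesis
      by (simp add: assoc_mult_mat_middle[OF rep(1) Fu Fd rep(2)])
  qed
  finally show ?thesis
    using rep(7) ud(1) by simp
qed

lemma is_linrep_intertwine_right_extend:
  assumes k: "k \<ge> 2" and S: "subfield_of_real_algebraic S" and rep: "is_linrep S k f r lam gam Fs"
    and C: "C \<in> carrier_mat r t" "mat_over S C"
    and M: "\<And>d. d < k \<Longrightarrow> M d \<in> carrier_mat t t \<and> mat_over S (M d) \<and> Fs d * C = C * M d"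
    and Y: "\<And>d. 0 < d \<Longrightarrow> d < k \<Longrightarrow> Y d \<in> carrier_mat t 1 \<and> mat_over S (Y d) \<and> Fs d * gam = C * Y d"
  shows "\<exists>lam' gam' Fs'. is_linrep S k f (t + 1) lam' gam' Fs'"
proof -
  note rep' = is_linrepD[OF rep]
  \<comment> \<open>The new coordinate t stands for gam. Digit 0 acts on it by 0 instead of by Fs 0, which is
    harmless because the most significant digit is never 0.\<close>
  define Fs' where "Fs' d = mat (t + 1) (t + 1) (\<lambda>(i, j).
    if i < t \<and> j < t then M d $$ (i, j) else if i < t \<and> j = t \<and> 0 < d then Y d $$ (i, 0) else 0)"
    for d
  define lam' where "lam' = mat 1 (t + 1) (\<lambda>(_, j). if j < t then (lam * C) $$ (0, j) else f 0)"
  define e where "e = mat (t + 1) 1 (\<lambda>(i, _). if i = t then 1 else (0 :: real))"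
  define E where "E = mat (t + 1) t (\<lambda>(i, j). if i = j then 1 else (0 :: real))"
  have carriers: "lam' \<in> carrier_mat 1 (t + 1)" "e \<in> carrier_mat (t + 1) 1"
    "E \<in> carrier_mat (t + 1) t" "\<And>d. Fs' d \<in> carrier_mat (t + 1) (t + 1)"
    by (simp_all add: lam'_def e_def E_def Fs'_def)
  have "f n = (lam' * mat_of_word (t + 1) Fs' (base_digits k n) * e) $$ (0, 0)" for n
  proof (rule linrep_eval_through_embedding[OF k rep C(1) _ _ carriers])
    show "Fs' d * E = E * M d" if "d < k" for d
      using M[OF that] by (intro eq_matI)
        (auto simp: Fs'_def E_def scalar_prod_def sum.If_cases sum_delta_simps cong: if_cong)
    show "Fs' d * e = E * Y d" if "0 < d" "d < k" for d
      using that Y[OF that] by (intro eq_matI)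
        (auto simp: Fs'_def E_def e_def scalar_prod_def sum.If_cases sum_delta_simps cong: if_cong)
    show "lam' * E = lam * C"
      using rep'(1) C(1) by (intro eq_matI)
        (auto simp: lam'_def E_def scalar_prod_def sum.If_cases sum_delta_simps cong: if_cong)
    show "(lam' * e) $$ (0, 0) = f 0"
      by (auto simp: lam'_def e_def scalar_prod_def sum.If_cases sum_delta_simps cong: if_cong)
  qed (use M Y in auto)
  moreover have "f 0 \<in> S"
    by (rule linrep_value_in_subfield[OF S rep])
  moreover have "mat_over S (lam * C)"
    using C rep'(1,3) by (intro mat_over_mult[OF S]) auto
  moreover have "mat_over S (Fs' d)" if "d < k" for d
    using M[OF that] Y[of d] that subfield_zero_one[OF S] by (auto simp: mat_over_def Fs'_def)
  ultimately have "is_linrep S k f (t + 1) lam' e Fs'"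
    using carriers rep'(1) C(1) subfield_zero_one[OF S]
    by (auto simp: is_linrep_def mat_of_n_eq_mat_of_word mat_over_def lam'_def e_def)
  then show ?thesis
    by blast
qed

section \<open>Orbits of a minimal representation\<close>

definition left_orbit :: "nat \<Rightarrow> nat \<Rightarrow> real mat \<Rightarrow> (nat \<Rightarrow> real mat) \<Rightarrow> (nat \<Rightarrow> real) set" where
  "left_orbit k r lam Fs = {col_fun (transpose_mat (lam * mat_of_word r Fs w)) | w. set w \<subseteq> {..<k}}"

text \<open>Only canonical words occur to the right of the digits of a number. The empty word is left
  out so that the orbit is invariant under every \<open>Fs d\<close>: \<open>Fs 0 * gam\<close> need not be of the form
  \<open>mat_of_word r Fs v * gam\<close> with \<open>v\<close> canonical.\<close>

definition right_orbit :: "nat \<Rightarrow> nat \<Rightarrow> real mat \<Rightarrow> (nat \<Rightarrow> real mat) \<Rightarrow> (nat \<Rightarrow> real) set" where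
  "right_orbit k r gam Fs = {col_fun (mat_of_word r Fs v * gam) | v. canonical_digits k v \<and> v \<noteq> []}"

lemma insert_right_orbit:
  assumes "gam \<in> carrier_mat r 1"
  shows "insert (col_fun gam) (right_orbit k r gam Fs)
    = {col_fun (mat_of_word r Fs v * gam) | v. canonical_digits k v}"
proof -
  have "canonical_digits k []"
    by (simp add: canonical_digits_def)
  then show ?thesis
    using assms by (auto simp: right_orbit_def intro: exI[of _ "[]"])
qed

lemma linrep_framed_digits:
  assumes k: "k \<ge> 2" and rep: "is_linrep S k f r lam gam Fs"
    and w: "set w \<subseteq> {..<k}" and v: "canonical_digits k v" and n: "n > 0"
  shows "(lam * mat_of_word r Fs w * mat_of_n k r Fs n * (mat_of_word r Fs v * gam)) $$ (0, 0)
    = f (from_digits k (w @ base_digits k n @ v))"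
proof -
  note rep = is_linrepD[OF rep]
  let ?ds = "base_digits k n"
  have ds: "set ?ds \<subseteq> {..<k}" "canonical_digits k ?ds" "?ds \<noteq> []"
    using k n by (simp_all add: set_base_digits_subset canonical_base_digits base_digits_eq_Nil_iff)
  have v_digits: "set v \<subseteq> {..<k}"
    using v by (simp add: canonical_digits_def)
  have carrier: "mat_of_word r Fs u \<in> carrier_mat r r" if "set u \<subseteq> {..<k}" for u
    using that rep(5) by (auto intro!: mat_of_word_carrier)
  have "canonical_digits k (w @ ?ds @ v)"
    using w ds v by (auto simp: canonical_digits_def last_append)
  then have digits: "base_digits k (from_digits k (w @ ?ds @ v)) = w @ ?ds @ v"
    using k by (simp add: base_digits_from_digits)
  have "mat_of_word r Fs (w @ ?ds @ v) = mat_of_word r Fs w * (mat_of_word r Fs ?ds * mat_of_word r Fs v)"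
    using w ds(1) v_digits rep(5) by (subst mat_of_word_append; auto simp: mat_of_word_append)+
  then have "lam * mat_of_word r Fs w * mat_of_word r Fs ?ds * (mat_of_word r Fs v * gam)
      = lam * mat_of_word r Fs (w @ ?ds @ v) * gam"
    using rep(1,2) carrier[OF w] carrier[OF ds(1)] carrier[OF v_digits]
    by (simp add: assoc_mult_mat[of _ 1 r _ r _ r] assoc_mult_mat[of _ r r _ r _ 1]
        assoc_mult_mat[of _ 1 r _ r _ 1] assoc_mult_mat[of _ r r _ r _ r])
  then show ?thesis
    using rep(7) digits by (simp add: mat_of_n_eq_mat_of_word)
qed

lemma linrep_orbits_bigo:
  assumes k: "k \<ge> 2" and rep: "is_linrep S k f r lam gam Fs"
    and f: "f \<in> O(\<lambda>n. real n powr \<sigma> * ln (real n) ^ l)"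
    and x: "x \<in> left_orbit k r lam Fs" and y: "y \<in> insert (col_fun gam) (right_orbit k r gam Fs)"
  shows "(\<lambda>n. bilinear_form r x (mat_of_n k r Fs n) y) \<in> O(\<lambda>n. real n powr \<sigma> * ln (real n) ^ l)"
proof -
  note rep' = is_linrepD[OF rep]
  obtain w where w: "set w \<subseteq> {..<k}" and x: "x = col_fun (transpose_mat (lam * mat_of_word r Fs w))"
    using x by (auto simp: left_orbit_def)
  obtain v where v: "canonical_digits k v" and y: "y = col_fun (mat_of_word r Fs v * gam)"
    using y by (auto simp: insert_right_orbit[OF rep'(2)])
  have carrier: "mat_of_word r Fs u \<in> carrier_mat r r" if "set u \<subseteq> {..<k}" for u
    using that rep'(5) by (auto intro!: mat_of_word_carrier)
  have eq: "bilinear_form r x (mat_of_n k r Fs n) y = f (from_digits k (w @ base_digits k n @ v))"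
    if "n > 0" for n
    unfolding x y using linrep_framed_digits[OF k rep w v that] rep'(1,2) carrier[OF w] v
      mat_of_n_carrier[OF rep]
    by (subst bilinear_form_col_fun) (auto simp: canonical_digits_def intro!: mult_carrier_mat carrier)
  have ev: "eventually (\<lambda>n. f (from_digits k (w @ base_digits k n @ v))
      = bilinear_form r x (mat_of_n k r Fs n) y) at_top"
    using eventually_gt_at_top[of 0] by (rule eventually_mono) (simp add: eq)
  have "(\<lambda>n. f (from_digits k (w @ base_digits k n @ v))) \<in> O(\<lambda>n. real n powr \<sigma> * ln (real n) ^ l)"
  proof (rule bigo_compose_linearly_bounded[OF f])
    show "eventually (\<lambda>n. n \<le> from_digits k (w @ base_digits k n @ v) \<and>
        from_digits k (w @ base_digits k n @ v) \<le> k ^ length w * (2 + k ^ Suc (length v)) * n) at_top"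
      using eventually_gt_at_top[of 0] by (rule eventually_mono)
        (use from_digits_padded_bounds[OF k w] v in \<open>simp add: canonical_digits_def\<close>)
  qed
  then show ?thesis
    by (rule iffD1[OF landau_o.big.in_cong[OF ev]])
qed

lemma orbits_subset:
  assumes S: "subfield_of_real_algebraic S" and rep: "is_linrep S k f r lam gam Fs"
  shows "left_orbit k r lam Fs \<subseteq> vanishing_from r \<inter> {x. range x \<subseteq> S}"
    and "insert (col_fun gam) (right_orbit k r gam Fs) \<subseteq> vanishing_from r \<inter> {x. range x \<subseteq> S}"
proof -
  note rep' = is_linrepD[OF rep]
  have word: "mat_of_word r Fs w \<in> carrier_mat r r \<and> mat_over S (mat_of_word r Fs w)"
    if "set w \<subseteq> {..<k}" for w
    using that rep' by (auto intro!: mat_of_word_carrier mat_over_mat_of_word[OF S])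
  have col: "col_fun A \<in> vanishing_from r \<inter> {x. range x \<subseteq> S}"
    if "A \<in> carrier_mat r 1" "mat_over S A" for A
    using that col_fun_vanishing_from[OF that(1)] range_col_fun_subset[OF S that(2)] by auto
  show "left_orbit k r lam Fs \<subseteq> vanishing_from r \<inter> {x. range x \<subseteq> S}"
  proof
    fix x assume "x \<in> left_orbit k r lam Fs"
    then obtain w where w: "set w \<subseteq> {..<k}" and x: "x = col_fun (transpose_mat (lam * mat_of_word r Fs w))"
      by (auto simp: left_orbit_def)
    have "lam * mat_of_word r Fs w \<in> carrier_mat 1 r" "mat_over S (lam * mat_of_word r Fs w)"
      using word[OF w] rep'(1,3) by (auto intro: mat_over_mult[OF S])
    then show "x \<in> vanishing_from r \<inter> {x. range x \<subseteq> S}"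
      unfolding x by (intro col) auto
  qed
  show "insert (col_fun gam) (right_orbit k r gam Fs) \<subseteq> vanishing_from r \<inter> {x. range x \<subseteq> S}"
  proof
    fix y assume "y \<in> insert (col_fun gam) (right_orbit k r gam Fs)"
    then obtain v where v: "set v \<subseteq> {..<k}" and y: "y = col_fun (mat_of_word r Fs v * gam)"
      by (auto simp: insert_right_orbit[OF rep'(2)] canonical_digits_def)
    have "mat_of_word r Fs v * gam \<in> carrier_mat r 1" "mat_over S (mat_of_word r Fs v * gam)"
      using word[OF v] rep'(2,4) by (auto intro: mat_over_mult[OF S])
    then show "y \<in> vanishing_from r \<inter> {x. range x \<subseteq> S}"
      unfolding y by (rule col)
  qed
qed

lemma col_fun_transpose_mem_left_orbit:
  "lam \<in> carrier_mat 1 r \<Longrightarrow> col_fun (transpose_mat lam) \<in> left_orbit k r lam Fs"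
  unfolding left_orbit_def by (intro CollectI exI[of _ "[]"]) auto

lemma left_orbit_closed:
  assumes rep: "is_linrep S k f r lam gam Fs" and x: "x \<in> left_orbit k r lam Fs" and d: "d < k"
  shows "col_fun (transpose_mat (Fs d) * mat_of_col_funs r [x]) \<in> left_orbit k r lam Fs"
proof -
  note rep' = is_linrepD[OF rep]
  obtain w where w: "set w \<subseteq> {..<k}" and x: "x = col_fun (transpose_mat (lam * mat_of_word r Fs w))"
    using x by (auto simp: left_orbit_def)
  have Fw: "mat_of_word r Fs w \<in> carrier_mat r r"
    using w rep'(5) by (auto intro!: mat_of_word_carrier)
  have "mat_of_word r Fs (w @ [d]) = mat_of_word r Fs w * Fs d"
    using w d rep'(5) by (intro mat_of_word_snoc) auto
  then have "transpose_mat (Fs d) * mat_of_col_funs r [x] = transpose_mat (lam * mat_of_word r Fs (w @ [d]))"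
    using rep'(1,5) d Fw
    by (simp add: x mat_of_col_funs_col_fun transpose_mult[of _ 1 r "Fs d" r, symmetric]
        assoc_mult_mat[of lam 1 r _ r "Fs d" r])
  moreover have "col_fun (transpose_mat (lam * mat_of_word r Fs (w @ [d]))) \<in> left_orbit k r lam Fs"
    using w d unfolding left_orbit_def by (intro CollectI exI[of _ "w @ [d]"]) auto
  ultimately show ?thesis
    by simp
qed

lemma right_orbit_closed:
  assumes rep: "is_linrep S k f r lam gam Fs" and y: "y \<in> right_orbit k r gam Fs" and d: "d < k"
  shows "col_fun (Fs d * mat_of_col_funs r [y]) \<in> right_orbit k r gam Fs"
proof -
  note rep' = is_linrepD[OF rep]
  obtain v where v: "canonical_digits k v" "v \<noteq> []" and y: "y = col_fun (mat_of_word r Fs v * gam)"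
    using y by (auto simp: right_orbit_def)
  have "mat_of_word r Fs v \<in> carrier_mat r r"
    using v rep'(5) by (auto simp: canonical_digits_def intro!: mat_of_word_carrier)
  then have "Fs d * mat_of_col_funs r [y] = mat_of_word r Fs (d # v) * gam"
    using rep'(2,5) d by (simp add: y mat_of_col_funs_col_fun assoc_mult_mat[of _ r r _ r gam 1])
  moreover have "col_fun (mat_of_word r Fs (d # v) * gam) \<in> right_orbit k r gam Fs"
    using v d unfolding right_orbit_def
    by (intro CollectI exI[of _ "d # v"]) (auto simp: canonical_digits_Cons)
  ultimately show ?thesis
    by simp
qed

lemma digit_times_gam_mem_right_orbit:
  assumes rep: "is_linrep S k f r lam gam Fs" and "0 < d" and "d < k"
  shows "col_fun (Fs d * gam) \<in> right_orbit k r gam Fs"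
  using is_linrepD(5)[OF rep assms(3)] assms(2,3) unfolding right_orbit_def
  by (intro CollectI exI[of _ "[d]"]) (auto simp: canonical_digits_def)

lemma is_linrep_of_left_orbit_list:
  assumes S: "subfield_of_real_algebraic S" and rep: "is_linrep S k f r lam gam Fs"
    and bs: "set bs \<subseteq> left_orbit k r lam Fs" "left_orbit k r lam Fs \<subseteq> span (set bs)"
  shows "\<exists>lam' gam' Fs'. is_linrep S k f (length bs) lam' gam' Fs'"
proof -
  let ?t = "length bs" and ?C = "mat_of_col_funs r bs"
  note rep' = is_linrepD[OF rep]
  have bs_S: "\<forall>b\<in>set bs. range b \<subseteq> S"
    using orbits_subset(1)[OF S rep] bs(1) by blast
  have C: "?C \<in> carrier_mat r ?t" "mat_over S ?C"
    using mat_over_mat_of_col_funs[OF bs_S] by (auto simp: mat_of_col_funs_def)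
  obtain y where y: "y \<in> carrier_mat ?t 1" "mat_over S y" "transpose_mat lam = ?C * y"
    using col_in_span_eq_mult[OF S bs_S, of "transpose_mat lam" r] bs(2) rep'(1,3)
      col_fun_transpose_mem_left_orbit[OF rep'(1)] by auto
  have "\<exists>M \<in> carrier_mat ?t ?t. mat_over S M \<and> transpose_mat (Fs d) * ?C = ?C * M" if d: "d < k" for d
  proof (rule intertwining_mat_exists[OF S bs_S])
    show "transpose_mat (Fs d) \<in> carrier_mat r r" "mat_over S (transpose_mat (Fs d))"
      using rep' d by auto
    fix s assume "s < ?t"
    then show "col_fun (transpose_mat (Fs d) * mat_of_col_funs r [bs ! s]) \<in> span (set bs)"
      using left_orbit_closed[OF rep _ d] bs nth_mem by blast
  qed
  then obtain M where M: "\<And>d. d < k \<Longrightarrow>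
      M d \<in> carrier_mat ?t ?t \<and> mat_over S (M d) \<and> transpose_mat (Fs d) * ?C = ?C * M d"
    by metis
  have "is_linrep S k f ?t (transpose_mat y) (transpose_mat ?C * gam) (\<lambda>d. transpose_mat (M d))"
  proof (rule is_linrep_intertwine_left[OF S rep])
    show "transpose_mat y * transpose_mat ?C = lam"
      using y C by (metis transpose_mult transpose_transpose)
    fix d assume d: "d < k"
    have "transpose_mat (M d) * transpose_mat ?C = transpose_mat (?C * M d)"
      using transpose_mult[OF C(1), of "M d" ?t] M[OF d] by simp
    also have "\<dots> = transpose_mat (transpose_mat (Fs d) * ?C)"
      using M[OF d] by simp
    also have "\<dots> = transpose_mat ?C * Fs d"
      using transpose_mult[of "transpose_mat (Fs d)" r r ?C ?t] rep'(5)[OF d] C by simp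
    finally show "transpose_mat (M d) \<in> carrier_mat ?t ?t \<and> mat_over S (transpose_mat (M d)) \<and>
        transpose_mat (M d) * transpose_mat ?C = transpose_mat ?C * Fs d"
      using M[OF d] by simp
  qed (use y C in auto)
  then show ?thesis
    by blast
qed

lemma is_linrep_of_right_orbit_list:
  assumes k: "k \<ge> 2" and S: "subfield_of_real_algebraic S" and rep: "is_linrep S k f r lam gam Fs"
    and bs: "set bs \<subseteq> right_orbit k r gam Fs" "right_orbit k r gam Fs \<subseteq> span (set bs)"
  shows "\<exists>lam' gam' Fs'. is_linrep S k f
    (if col_fun gam \<in> span (set bs) then length bs else length bs + 1) lam' gam' Fs'"
proof -
  let ?t = "length bs" and ?C = "mat_of_col_funs r bs"
  note rep' = is_linrepD[OF rep]
  have bs_S: "\<forall>b\<in>set bs. range b \<subseteq> S"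
    using orbits_subset(2)[OF S rep] bs(1) by blast
  have C: "?C \<in> carrier_mat r ?t" "mat_over S ?C"
    using mat_over_mat_of_col_funs[OF bs_S] by (auto simp: mat_of_col_funs_def)
  have "\<exists>M \<in> carrier_mat ?t ?t. mat_over S M \<and> Fs d * ?C = ?C * M" if d: "d < k" for d
  proof (rule intertwining_mat_exists[OF S bs_S])
    show "Fs d \<in> carrier_mat r r" "mat_over S (Fs d)"
      using rep' d by auto
    fix s assume "s < ?t"
    then show "col_fun (Fs d * mat_of_col_funs r [bs ! s]) \<in> span (set bs)"
      using right_orbit_closed[OF rep _ d] bs nth_mem by blast
  qed
  then obtain M where M: "\<And>d. d < k \<Longrightarrow>
      M d \<in> carrier_mat ?t ?t \<and> mat_over S (M d) \<and> Fs d * ?C = ?C * M d"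
    by metis
  have "\<exists>y \<in> carrier_mat ?t 1. mat_over S y \<and> Fs d * gam = ?C * y" if d: "0 < d" "d < k" for d
  proof (rule col_in_span_eq_mult[OF S bs_S])
    show "col_fun (Fs d * gam) \<in> span (set bs)"
      using digit_times_gam_mem_right_orbit[OF rep d] bs(2) by auto
    show "Fs d * gam \<in> carrier_mat r 1"
      by (rule mult_carrier_mat[OF rep'(5)[OF d(2)] rep'(2)])
    show "mat_over S (Fs d * gam)"
      using rep'(2,4) rep'(5,6)[OF d(2)] by (intro mat_over_mult[OF S]) auto
  qed
  then obtain Y where Y: "\<And>d. 0 < d \<Longrightarrow> d < k \<Longrightarrow>
      Y d \<in> carrier_mat ?t 1 \<and> mat_over S (Y d) \<and> Fs d * gam = ?C * Y d"
    by metis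
  show ?thesis
  proof (cases "col_fun gam \<in> span (set bs)")
    case True
    then obtain y where y: "y \<in> carrier_mat ?t 1" "mat_over S y" "gam = ?C * y"
      using col_in_span_eq_mult[OF S bs_S rep'(2,4)] by blast
    then show ?thesis
      using is_linrep_intertwine_right[OF S rep C M y] True by auto
  next
    case False
    then show ?thesis
      using is_linrep_intertwine_right_extend[OF k S rep C M Y] by auto
  qed
qed

lemma minimal_linrep_left_orbit_spans:
  assumes S: "subfield_of_real_algebraic S" and minimal: "is_minimal_linrep S k f r lam gam Fs"
    and i: "i < r"
  shows "indicator {i} \<in> span (left_orbit k r lam Fs)"
proof (rule ccontr)
  let ?V = "left_orbit k r lam Fs"
  assume not_span: "indicator {i} \<notin> span ?V"
  have rep: "is_linrep S k f r lam gam Fs"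
    using minimal by (simp add: is_minimal_linrep_def)
  then have "insert (col_fun (transpose_mat lam)) ?V = ?V"
    using col_fun_transpose_mem_left_orbit is_linrepD(1) by blast
  then obtain bs where bs: "set bs \<subseteq> ?V" "?V \<subseteq> span (set bs)" "length bs < r"
    using short_spanning_list[of "col_fun (transpose_mat lam)" ?V r i] orbits_subset(1)[OF S rep]
      i not_span by (metis le_inf_iff)
  then obtain lam' gam' Fs' where "is_linrep S k f (length bs) lam' gam' Fs'"
    using is_linrep_of_left_orbit_list[OF S rep] by blast
  then show False
    using minimal bs(3) unfolding is_minimal_linrep_def by (meson not_le)
qed

lemma minimal_linrep_right_orbit_spans:
  assumes k: "k \<ge> 2" and S: "subfield_of_real_algebraic S"
    and minimal: "is_minimal_linrep S k f r lam gam Fs" and j: "j < r"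
  shows "indicator {j} \<in> span (insert (col_fun gam) (right_orbit k r gam Fs))"
proof (rule ccontr)
  let ?V = "right_orbit k r gam Fs"
  assume not_span: "indicator {j} \<notin> span (insert (col_fun gam) ?V)"
  have rep: "is_linrep S k f r lam gam Fs"
    using minimal by (simp add: is_minimal_linrep_def)
  obtain bs where bs: "set bs \<subseteq> ?V" "?V \<subseteq> span (set bs)" "length bs < r"
    and bs_gam: "col_fun gam \<notin> span (set bs) \<Longrightarrow> length bs + 1 < r"
    using short_spanning_list[of "col_fun gam" ?V r j] orbits_subset(2)[OF S rep] j not_span
    by (metis le_inf_iff)
  then obtain lam' gam' Fs' where
    "is_linrep S k f (if col_fun gam \<in> span (set bs) then length bs else length bs + 1) lam' gam' Fs'"
    using is_linrep_of_right_orbit_list[OF k S rep] by blast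
  then show False
    using minimal bs(3) bs_gam unfolding is_minimal_linrep_def by (metis not_le)
qed

theorem proposition3p9:
  fixes k r :: nat and S :: "real set" and f :: "nat \<Rightarrow> real"
    and lam gam :: "real mat" and Fs :: "nat \<Rightarrow> real mat"
    and \<sigma> :: real and l :: nat
  assumes "k \<ge> 2"
    and "subfield_of_real_algebraic S"
    and "is_minimal_linrep S k f r lam gam Fs"
  shows "f \<in> O(\<lambda>n. real n powr \<sigma> * ln (real n) ^ l) \<longleftrightarrow>
         (\<forall>i<r. \<forall>j<r. (\<lambda>n. mat_of_n k r Fs n $$ (i,j)) \<in> O(\<lambda>n. real n powr \<sigma> * ln (real n) ^ l))"
proof -
  let ?h = "\<lambda>n. real n powr \<sigma> * ln (real n) ^ l" and ?F = "mat_of_n k r Fs"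
  have rep: "is_linrep S k f r lam gam Fs"
    using assms(3) by (simp add: is_minimal_linrep_def)
  have "\<forall>i<r. \<forall>j<r. (\<lambda>n. ?F n $$ (i, j)) \<in> O(?h) \<Longrightarrow> f \<in> O(?h)"
    by (rule linrep_bigo_if_entries_bigo[OF rep])
  moreover have "\<forall>i<r. \<forall>j<r. (\<lambda>n. ?F n $$ (i, j)) \<in> O(?h)" if f: "f \<in> O(?h)"
  proof (intro allI impI)
    fix i j assume i: "i < r" and j: "j < r"
    have "span (insert (col_fun gam) (right_orbit k r gam Fs))
        \<subseteq> {y. (\<lambda>n. bilinear_form r x (?F n) y) \<in> O(?h)}"
      if "x \<in> left_orbit k r lam Fs" for x
      using linrep_orbits_bigo[OF assms(1) rep f that]
      by (intro real_vector.span_minimal subspace_bigo_linear linear_bilinear_form_right) auto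
    then have "span (left_orbit k r lam Fs)
        \<subseteq> {x. (\<lambda>n. bilinear_form r x (?F n) (indicator {j})) \<in> O(?h)}"
      using minimal_linrep_right_orbit_spans[OF assms j]
      by (intro real_vector.span_minimal subspace_bigo_linear linear_bilinear_form_left) auto
    then show "(\<lambda>n. ?F n $$ (i, j)) \<in> O(?h)"
      using minimal_linrep_left_orbit_spans[OF assms(2,3) i] bilinear_form_indicator[OF i j] by auto
  qed
  ultimately show ?thesis
    by blast
qed

end
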